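(* Suppose $(X_i,Y_i)_{i\in[n+m]}$ is an i.i.d. sample from $P_{XY}$. Then for all measurable $D:\mathcal X\to\{0,1\}$ and all $C:\mathcal X\to\mathcal I$, $$FCR(D,C)=mFCR(D,C)\,\mathbb P\Big(\sum_{i\in[m]}D(X_{n+i})>0\Big).$$
   Context: $\mathcal I$ is a collection of subsets of $\mathcal Y$. $FCR(D,C)=\mathbb E\left[\frac{\sum_{i\in[m]}\mathbb 1\{Y_{n+i}\notin C(X_{n+i})\}D(X_{n+i})}{1\vee\sum_{i\in[m]}D(X_{n+i})}\right]$ and, for $(X,Y)\sim P_{XY}$, $mFCR(D,C)=\frac{\mathbb E[\mathbb 1\{Y\notin C(X)\}D(X)]}{\mathbb E[D(X)]}$, with the convention that the ratio is $0$ if the denominator is $0$. *)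

theory Defs
  imports "HOL-Probability.Probability"
begin

definition FCR :: "'a measure \<Rightarrow> (nat \<Rightarrow> 'a \<Rightarrow> 'x) \<Rightarrow> (nat \<Rightarrow> 'a \<Rightarrow> 'y) \<Rightarrow> nat \<Rightarrow> nat
    \<Rightarrow> ('x \<Rightarrow> bool) \<Rightarrow> ('x \<Rightarrow> 'y set) \<Rightarrow> real" where
  "FCR M X Y n m D C =
     (\<integral>\<omega>. (\<Sum>i\<in>{1..m}. of_bool (Y (n+i) \<omega> \<notin> C (X (n+i) \<omega>)) * of_bool (D (X (n+i) \<omega>)))
          / max 1 (\<Sum>i\<in>{1..m}. of_bool (D (X (n+i) \<omega>))) \<partial>M)"

text \<open>Marginal false coverage rate under the joint law P of (X,Y);
  division by zero yields 0 in Isabelle, matching the stated convention.\<close>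
definition mFCR :: "('x \<times> 'y) measure \<Rightarrow> ('x \<Rightarrow> bool) \<Rightarrow> ('x \<Rightarrow> 'y set) \<Rightarrow> real" where
  "mFCR P D C =
     (\<integral>z. of_bool (snd z \<notin> C (fst z)) * of_bool (D (fst z)) \<partial>P) / (\<integral>z. of_bool (D (fst z)) \<partial>P)"

end

theory Submission
  imports Defs
begin

(* Write S for the number of selected test points and S_i for the number of selected test points
   other than the i-th. Whenever the i-th point is selected, its weight 1 / max 1 S equals
   1 / (1 + S_i), and S_i is independent of the i-th pair. Hence every summand of the false coverage
   proportion factors, giving FCR = E[1{Y \<notin> C(X)} D(X)] * W with W = \<Sum>_i E[1 / (1 + S_i)].
   The same computation with the miscoverage indicator dropped gives P(S > 0) = E[D(X)] * W,
   and dividing the two identities yields the claim (when E[D(X)] = 0 both sides vanish). *)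

lemma (in prob_space) integral_mult_indep_complement:
  fixes h :: "'b \<Rightarrow> real" and G :: "('i \<Rightarrow> 'b) \<Rightarrow> real"
  assumes indep: "indep_vars (\<lambda>_. N) Z J" and i: "i \<in> J" and law: "distr M N (Z i) = P"
    and h: "integrable P h"
    and G: "G \<in> borel_measurable (PiM (J - {i}) (\<lambda>_. N))"
    and G_int: "integrable M (\<lambda>\<omega>. G (restrict (\<lambda>j. Z j \<omega>) (J - {i})))"
  shows "integrable M (\<lambda>\<omega>. h (Z i \<omega>) * G (restrict (\<lambda>j. Z j \<omega>) (J - {i})))"
    and "(\<integral>\<omega>. h (Z i \<omega>) * G (restrict (\<lambda>j. Z j \<omega>) (J - {i})) \<partial>M)
           = (\<integral>z. h z \<partial>P) * (\<integral>\<omega>. G (restrict (\<lambda>j. Z j \<omega>) (J - {i})) \<partial>M)"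
proof -
  have Zi: "Z i \<in> M \<rightarrow>\<^sub>M N"
    using indep i by (simp add: indep_vars_def)
  have hN: "h \<in> borel_measurable N"
    using borel_measurable_integrable[OF h] unfolding law[symmetric] by simp
  have "indep_var borel ((\<lambda>w. h (w i)) \<circ> (\<lambda>\<omega>. restrict (\<lambda>j. Z j \<omega>) {i}))
      borel (G \<circ> (\<lambda>\<omega>. restrict (\<lambda>j. Z j \<omega>) (J - {i})))"
    using i hN G by (intro indep_var_compose[OF indep_var_restrict[OF indep]]) auto
  then have indep_factors: "indep_var borel (\<lambda>\<omega>. h (Z i \<omega>)) borel (\<lambda>\<omega>. G (restrict (\<lambda>j. Z j \<omega>) (J - {i})))"
    by (simp add: comp_def)
  have h_int: "integrable M (\<lambda>\<omega>. h (Z i \<omega>))"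
    using h integrable_distr_eq[OF Zi hN] by (simp add: law)
  show "integrable M (\<lambda>\<omega>. h (Z i \<omega>) * G (restrict (\<lambda>j. Z j \<omega>) (J - {i})))"
    by (rule indep_var_integrable[OF indep_factors h_int G_int])
  show "(\<integral>\<omega>. h (Z i \<omega>) * G (restrict (\<lambda>j. Z j \<omega>) (J - {i})) \<partial>M)
           = (\<integral>z. h z \<partial>P) * (\<integral>\<omega>. G (restrict (\<lambda>j. Z j \<omega>) (J - {i})) \<partial>M)"
    using indep_var_lebesgue_integral[OF indep_factors h_int G_int] integral_distr[OF Zi hN]
    by (simp add: law)
qed

lemma div_max_one_count_eq_leave_one_out:
  fixes a :: "'i \<Rightarrow> bool" and x :: real
  assumes "finite J" "i \<in> J" "a i"
  shows "x / max 1 (\<Sum>j\<in>J. of_bool (a j)) = x / (1 + (\<Sum>j\<in>J - {i}. of_bool (a j)))"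
proof -
  have "(\<Sum>j\<in>J. of_bool (a j)) = 1 + (\<Sum>j\<in>J - {i}. of_bool (a j) :: real)"
    using assms by (simp only: sum.remove) simp
  moreover have "0 \<le> (\<Sum>j\<in>J - {i}. of_bool (a j) :: real)"
    by (rule sum_nonneg) simp
  ultimately show ?thesis by simp
qed

lemma of_nat_div_max_one: "real k / max 1 (real k) = of_bool (k > 0)"
  by (cases "k = 0") auto

lemma (in prob_space) integral_sum_div_max_count:
  fixes A :: "'b \<Rightarrow> bool" and h :: "'b \<Rightarrow> real"
  assumes indep: "indep_vars (\<lambda>_. N) Z J" and J: "finite J"
    and law: "\<And>j. j \<in> J \<Longrightarrow> distr M N (Z j) = P"
    and A: "A \<in> N \<rightarrow>\<^sub>M count_space UNIV"
    and h: "h \<in> borel_measurable N" "\<And>z. \<bar>h z\<bar> \<le> B" and h_A: "\<And>z. \<not> A z \<Longrightarrow> h z = 0"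
  shows "(\<integral>\<omega>. (\<Sum>i\<in>J. h (Z i \<omega>)) / max 1 (\<Sum>i\<in>J. of_bool (A (Z i \<omega>))) \<partial>M)
      = (\<integral>z. h z \<partial>P) * (\<Sum>i\<in>J. \<integral>\<omega>. 1 / (1 + (\<Sum>j\<in>J - {i}. of_bool (A (Z j \<omega>)))) \<partial>M)"
proof -
  have Z_meas: "Z j \<in> M \<rightarrow>\<^sub>M N" if "j \<in> J" for j
    using indep that by (simp add: indep_vars_def)
  define G where "G i w = 1 / (1 + (\<Sum>j\<in>J - {i}. of_bool (A (w j))) :: real)" for i w
  have G_restrict: "G i (restrict (\<lambda>j. Z j \<omega>) (J - {i})) = 1 / (1 + (\<Sum>j\<in>J - {i}. of_bool (A (Z j \<omega>))))"
    for i \<omega> unfolding G_def by (auto intro!: sum.cong arg_cong[where f="\<lambda>s. 1 / (1 + s)"])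
  have G_meas: "G i \<in> borel_measurable (PiM (J - {i}) (\<lambda>_. N))" for i
    unfolding G_def using A by measurable
  have G_bounded: "\<bar>G i w\<bar> \<le> 1" for i w
  proof -
    have "0 \<le> (\<Sum>j\<in>J - {i}. of_bool (A (w j)) :: real)"
      by (rule sum_nonneg) simp
    then show ?thesis unfolding G_def by simp
  qed
  have G_int: "integrable M (\<lambda>\<omega>. G i (restrict (\<lambda>j. Z j \<omega>) (J - {i})))" if "i \<in> J" for i
  proof (rule integrable_const_bound[where B=1])
    show "(\<lambda>\<omega>. G i (restrict (\<lambda>j. Z j \<omega>) (J - {i}))) \<in> borel_measurable M"
      using Z_meas by (intro measurable_compose[OF measurable_restrict G_meas]) auto
  qed (simp add: G_bounded)
  have h_int: "integrable P h" if "i \<in> J" for i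
  proof -
    interpret P: prob_space P
      using prob_space_distr[OF Z_meas[OF that]] by (simp add: law that)
    show ?thesis
      using h law[OF that] by (intro P.integrable_const_bound[where B=B]) auto
  qed
  have leave_one_out: "h (Z i \<omega>) / max 1 (\<Sum>j\<in>J. of_bool (A (Z j \<omega>)))
      = h (Z i \<omega>) * G i (restrict (\<lambda>j. Z j \<omega>) (J - {i}))" if "i \<in> J" for i \<omega>
  proof (cases "A (Z i \<omega>)")
    case True
    then show ?thesis
      using div_max_one_count_eq_leave_one_out[OF J that, of "\<lambda>j. A (Z j \<omega>)"]
      by (simp add: G_restrict)
  qed (simp add: h_A)
  have "(\<integral>\<omega>. (\<Sum>i\<in>J. h (Z i \<omega>)) / max 1 (\<Sum>i\<in>J. of_bool (A (Z i \<omega>))) \<partial>M)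
      = (\<integral>\<omega>. (\<Sum>i\<in>J. h (Z i \<omega>) * G i (restrict (\<lambda>j. Z j \<omega>) (J - {i}))) \<partial>M)"
    unfolding sum_divide_distrib by (intro Bochner_Integration.integral_cong sum.cong refl leave_one_out)
  also have "\<dots> = (\<Sum>i\<in>J. \<integral>\<omega>. h (Z i \<omega>) * G i (restrict (\<lambda>j. Z j \<omega>) (J - {i})) \<partial>M)"
    using integral_mult_indep_complement(1)[OF indep _ law h_int G_meas G_int]
    by (intro Bochner_Integration.integral_sum) blast
  also have "\<dots> = (\<Sum>i\<in>J. (\<integral>z. h z \<partial>P) * (\<integral>\<omega>. G i (restrict (\<lambda>j. Z j \<omega>) (J - {i})) \<partial>M))"
    using integral_mult_indep_complement(2)[OF indep _ law h_int G_meas G_int]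
    by (intro sum.cong) blast+
  finally show ?thesis
    by (simp only: sum_distrib_left G_restrict)
qed

lemma (in prob_space) prob_count_pos:
  fixes A :: "'b \<Rightarrow> bool"
  assumes indep: "indep_vars (\<lambda>_. N) Z J" and J: "finite J"
    and law: "\<And>j. j \<in> J \<Longrightarrow> distr M N (Z j) = P"
    and A: "A \<in> N \<rightarrow>\<^sub>M count_space UNIV"
  shows "prob {\<omega> \<in> space M. (\<Sum>i\<in>J. of_bool (A (Z i \<omega>)) :: real) > 0}
      = (\<integral>z. of_bool (A z) \<partial>P) * (\<Sum>i\<in>J. \<integral>\<omega>. 1 / (1 + (\<Sum>j\<in>J - {i}. of_bool (A (Z j \<omega>)))) \<partial>M)"
proof -
  have "prob {\<omega> \<in> space M. (\<Sum>i\<in>J. of_bool (A (Z i \<omega>)) :: real) > 0}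
      = (\<integral>\<omega>. indicator {\<omega> \<in> space M. (\<Sum>i\<in>J. of_bool (A (Z i \<omega>)) :: real) > 0} \<omega> \<partial>M)"
    by (simp add: Int_absorb2)
  also have "\<dots> = (\<integral>\<omega>. (\<Sum>i\<in>J. of_bool (A (Z i \<omega>))) / max 1 (\<Sum>i\<in>J. of_bool (A (Z i \<omega>))) \<partial>M)"
    using J by (intro Bochner_Integration.integral_cong) (simp_all add: of_nat_div_max_one)
  finally show ?thesis
    using integral_sum_div_max_count[OF indep J law A, of "\<lambda>z. of_bool (A z)" 1] A by simp
qed

lemma (in prob_space) integral_sum_div_max_count_eq_ratio_mult_prob:
  fixes A :: "'b \<Rightarrow> bool" and h :: "'b \<Rightarrow> real"
  assumes indep: "indep_vars (\<lambda>_. N) Z J" and J: "finite J"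
    and law: "\<And>j. j \<in> J \<Longrightarrow> distr M N (Z j) = P"
    and A: "A \<in> N \<rightarrow>\<^sub>M count_space UNIV"
    and h: "h \<in> borel_measurable N" "\<And>z. 0 \<le> h z" "\<And>z. h z \<le> of_bool (A z)"
  shows "(\<integral>\<omega>. (\<Sum>i\<in>J. h (Z i \<omega>)) / max 1 (\<Sum>i\<in>J. of_bool (A (Z i \<omega>))) \<partial>M)
      = (\<integral>z. h z \<partial>P) / (\<integral>z. of_bool (A z) \<partial>P)
        * prob {\<omega> \<in> space M. (\<Sum>i\<in>J. of_bool (A (Z i \<omega>)) :: real) > 0}"
proof -
  define W where "W = (\<Sum>i\<in>J. \<integral>\<omega>. 1 / (1 + (\<Sum>j\<in>J - {i}. of_bool (A (Z j \<omega>)) :: real)) \<partial>M)"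
  have h_bounded: "\<bar>h z\<bar> \<le> 1" for z
    using h(2,3)[of z] by (cases "A z") auto
  have h_A: "h z = 0" if "\<not> A z" for z
    using h(2,3)[of z] that by simp
  have numerator_vanishes: "(\<integral>z. h z \<partial>P) * W = 0" if "(\<integral>z. of_bool (A z) \<partial>P) = (0 :: real)"
  proof (cases "J = {}")
    case False
    then obtain j where j: "j \<in> J" by blast
    interpret P: prob_space P
      using prob_space_distr[of "Z j" N] indep j law[OF j] by (simp add: indep_vars_def)
    have A_real: "(\<lambda>z. of_bool (A z) :: real) \<in> borel_measurable N"
      using A by measurable
    have "(\<integral>z. h z \<partial>P) \<le> (\<integral>z. of_bool (A z) \<partial>P)"
      using h(1,3) h_bounded A_real law[OF j]
      by (intro integral_mono P.integrable_const_bound[where B=1]) auto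
    moreover have "0 \<le> (\<integral>z. h z \<partial>P)"
      by (rule Bochner_Integration.integral_nonneg) (simp add: h(2))
    ultimately show ?thesis
      using that by simp
  qed (simp add: W_def)
  show ?thesis
    using integral_sum_div_max_count[OF indep J law A h(1) h_bounded h_A] prob_count_pos[OF indep J law A]
      numerator_vanishes unfolding W_def[symmetric]
    by (cases "(\<integral>z. of_bool (A z) \<partial>P) = (0 :: real)") auto
qed

theorem proposition1:
  fixes M :: "'a measure" and MX :: "'x measure" and MY :: "'y measure"
    and P :: "('x \<times> 'y) measure"
    and X :: "nat \<Rightarrow> 'a \<Rightarrow> 'x" and Y :: "nat \<Rightarrow> 'a \<Rightarrow> 'y"
    and n m :: nat and I :: "'y set set"
    and D :: "'x \<Rightarrow> bool" and C :: "'x \<Rightarrow> 'y set"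
  assumes "prob_space M"
    and "\<And>i. i \<in> {1..n+m} \<Longrightarrow> X i \<in> M \<rightarrow>\<^sub>M MX"
    and "\<And>i. i \<in> {1..n+m} \<Longrightarrow> Y i \<in> M \<rightarrow>\<^sub>M MY"
    and "prob_space.indep_vars M (\<lambda>_. MX \<Otimes>\<^sub>M MY) (\<lambda>i \<omega>. (X i \<omega>, Y i \<omega>)) {1..n+m}"
    and "\<And>i. i \<in> {1..n+m} \<Longrightarrow> distr M (MX \<Otimes>\<^sub>M MY) (\<lambda>\<omega>. (X i \<omega>, Y i \<omega>)) = P"
    and "D \<in> MX \<rightarrow>\<^sub>M count_space UNIV"
    and "\<And>x. C x \<in> I"
    and "{z \<in> space (MX \<Otimes>\<^sub>M MY). snd z \<in> C (fst z)} \<in> sets (MX \<Otimes>\<^sub>M MY)"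
  shows "FCR M X Y n m D C
           = mFCR P D C * measure M {\<omega> \<in> space M. (\<Sum>i\<in>{1..m}. of_bool (D (X (n+i) \<omega>)) :: real) > 0}"
proof -
  \<comment> \<open>The measurability of X and Y is part of the independence hypothesis.\<close>
  interpret prob_space M by fact
  define N where "N = MX \<Otimes>\<^sub>M MY"
  define Z where "Z j \<omega> = (X j \<omega>, Y j \<omega>)" for j \<omega>
  define J where "J = {n+1..n+m}"
  define A where "A z = D (fst z)" for z :: "'x \<times> 'y"
  define f :: "'x \<times> 'y \<Rightarrow> real" where "f z = of_bool (snd z \<notin> C (fst z)) * of_bool (A z)" for z
  have J_sub: "J \<subseteq> {1..n+m}" and J_fin: "finite J"
    by (auto simp: J_def)
  have indep: "indep_vars (\<lambda>_. N) Z J"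
    using indep_vars_subset[OF assms(4) J_sub] by (simp add: N_def Z_def[abs_def])
  have law: "distr M N (Z j) = P" if "j \<in> J" for j
    using assms(5) J_sub that by (auto simp: N_def Z_def[abs_def])
  have A: "A \<in> N \<rightarrow>\<^sub>M count_space UNIV"
    unfolding A_def[abs_def] N_def using assms(6) by measurable
  have covered: "Measurable.pred N (\<lambda>z. snd z \<in> C (fst z))"
    using assms(8) by (simp add: Measurable.pred_def N_def)
  have f: "f \<in> borel_measurable N"
    unfolding f_def[abs_def] using covered A by measurable
  have reindex: "(\<Sum>j\<in>J. g j) = (\<Sum>i\<in>{1..m}. g (n+i))" for g :: "nat \<Rightarrow> real"
    by (rule sum.reindex_bij_witness[of _ "\<lambda>i. n + i" "\<lambda>j. j - n"]) (auto simp: J_def)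
  show ?thesis
    using integral_sum_div_max_count_eq_ratio_mult_prob[OF indep J_fin law A f]
    unfolding FCR_def mFCR_def reindex by (simp add: f_def A_def Z_def)
qed

end
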